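(* Let $M\in\mathbb{R}^{n\times n}$ be such that the function $x\mapsto x^TMx$ belongs to the class $\mathcal{Q}$. Define $Z=\sum_{P\in\mathcal{P}} P^TMP$, where $\mathcal{P}$ is the set of all $n\times n$ permutation matrices. Then the function $x\mapsto x^TZx$ also belongs to $\mathcal{Q}$.
   Context: Fix a positive integer $n$. Let $\mathbf{e}\in\mathbb{R}^n$ be the all-ones vector. A square matrix is stochastic if it is entrywise nonnegative and each row sums to $1$. Let $\mathcal{A}\subset\mathbb{R}^{n\times n}$ be the set of stochastic matrices $A=(a_{ij})$ such that: (i) $a_{ii}>0$ for all $i$; (ii) all positive entries in any given row of $A$ are equal; (iii) $a_{ij}>0$ if and only if $a_{ji}>0$; (iv) the graph on $\{1,\dots,n\}$ with edge set $\{(i,j): a_{ij}>0\}$ is connected. The class $\mathcal{Q}$ consists of all functions $Q(x)=x^TMx$ on $\mathbb{R}^n$ where (a) $M$ is nonzero, symmetric and nonnegative definite; (b) $x^TA^TMAx\le x^TMx$ for all $A\in\mathcal{A}$ and $x\in\mathbb{R}^n$; (c) $Q(\mathbf{e})=0$ (equivalently $M\mathbf{e}=0$). For a permutation $\sigma$ of $\{1,\dots,n\}$, the permutation matrix $P_\sigma$ is defined by $(P_\sigma x)_i=x_{\sigma(i)}$; $\mathcal{P}$ is the set of all such matrices. *)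

theory Defs
  imports "HOL-Analysis.Analysis" "HOL-Combinatorics.Permutations"
begin

definition stochastic :: "real^'n^'n \<Rightarrow> bool" where
  "stochastic A \<longleftrightarrow> (\<forall>i j. A $ i $ j \<ge> 0) \<and> (\<forall>i. (\<Sum>j\<in>UNIV. A $ i $ j) = 1)"

definition graph_connected :: "real^'n^'n \<Rightarrow> bool" where
  "graph_connected A \<longleftrightarrow> (\<forall>i j. (i, j) \<in> {(k, l). A $ k $ l > 0}\<^sup>*)"

definition classA :: "(real^'n^'n) set" where
  "classA = {A. stochastic A
      \<and> (\<forall>i. A $ i $ i > 0)
      \<and> (\<forall>i j k. A $ i $ j > 0 \<and> A $ i $ k > 0 \<longrightarrow> A $ i $ j = A $ i $ k)
      \<and> (\<forall>i j. A $ i $ j > 0 \<longleftrightarrow> A $ j $ i > 0)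
      \<and> graph_connected A}"

text \<open>The class \<Q>, described via the matrix M of Q(x) = x^T M x.\<close>
definition classQ :: "real^'n^'n \<Rightarrow> bool" where
  "classQ M \<longleftrightarrow> M \<noteq> 0 \<and> transpose M = M \<and> (\<forall>x. x \<bullet> (M *v x) \<ge> 0)
      \<and> (\<forall>A\<in>classA. \<forall>x. (A *v x) \<bullet> (M *v (A *v x)) \<le> x \<bullet> (M *v x))
      \<and> (let e = ((\<chi> i. 1) :: real^'n) in e \<bullet> (M *v e) = 0)"

text \<open>Permutation matrix: (P_\<sigma> x)_i = x_{\<sigma> i}.\<close>
definition perm_matrix :: "('n \<Rightarrow> 'n) \<Rightarrow> real^'n^'n" where
  "perm_matrix \<sigma> = (\<chi> i j. if \<sigma> i = j then 1 else 0)"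

definition perm_matrices :: "(real^'n^'n) set" where
  "perm_matrices = {perm_matrix \<sigma> | \<sigma>. \<sigma> permutes (UNIV :: 'n set)}"

end

theory Submission
  imports Defs
begin

text \<open>
  Conjugating a matrix of class \<A> by a permutation only relabels the vertices, so the result
  A' is again in \<A>, and it satisfies P A = A' P. Hence every summand x \<mapsto> Q (P x) of
  x^T Z x is again non-increasing under all A \<in> \<A>; symmetry, nonnegativity and Q(e) = 0 pass
  to the sum because P e = e. Finally Z \<noteq> 0: the identity contributes Q itself, and a sum of
  nonnegative quadratic forms vanishes only if every summand does.
\<close>

lemma matrix_vector_mult_sum_left:
  fixes f :: "'a \<Rightarrow> real^'n^'m"
  shows "finite S \<Longrightarrow> sum f S *v x = (\<Sum>a\<in>S. f a *v x)"
  by (induction S rule: finite_induct) (auto simp: matrix_vector_mult_add_rdistrib)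

lemma transpose_sum: "transpose (sum f S) = (\<Sum>a\<in>S. transpose (f a :: real^'n^'m))"
  by (simp add: transpose_def vec_eq_iff sum_component)

lemma inner_matrix_vector_symmetric:
  fixes M :: "real^'n^'n"
  assumes "transpose M = M"
  shows "x \<bullet> (M *v y) = y \<bullet> (M *v x)"
  by (metis assms dot_lmul_matrix inner_commute transpose_matrix_vector)

lemma quadratic_form_congruence:
  fixes P :: "real^'n^'m" and M :: "real^'m^'m"
  shows "x \<bullet> ((transpose P ** M ** P) *v x) = (P *v x) \<bullet> (M *v (P *v x))"
proof -
  have "(transpose P ** M ** P) *v x = transpose P *v (M *v (P *v x))"
    by (simp add: matrix_vector_mul_assoc matrix_mul_assoc)
  then show ?thesis
    by (metis dot_lmul_matrix inner_commute transpose_matrix_vector)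
qed

lemma quadratic_form_sum_congruences:
  fixes M :: "real^'m^'m" and S :: "(real^'n^'m) set"
  assumes "finite S"
  shows "x \<bullet> ((\<Sum>P\<in>S. transpose P ** M ** P) *v x) = (\<Sum>P\<in>S. (P *v x) \<bullet> (M *v (P *v x)))"
  by (simp add: matrix_vector_mult_sum_left[OF assms] inner_sum_right quadratic_form_congruence)

lemma symmetric_matrix_eq_0_if_quadratic_form_0:
  fixes M :: "real^'n^'n"
  assumes sym: "transpose M = M" and q0: "\<And>x. x \<bullet> (M *v x) = 0"
  shows "M = 0"
proof (rule matrix_eq[THEN iffD2], intro allI)
  fix x :: "real^'n"
  let ?y = "M *v x"
  have "0 = (x + ?y) \<bullet> (M *v (x + ?y))"
    using q0 by simp
  also have "\<dots> = x \<bullet> (M *v ?y) + ?y \<bullet> (M *v x)"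
    using q0 by (simp add: matrix_vector_right_distrib inner_add_left inner_add_right)
  also have "\<dots> = 2 * (?y \<bullet> ?y)"
    using inner_matrix_vector_symmetric[OF sym, of x ?y] by simp
  finally show "M *v x = 0 *v x"
    by simp
qed

text \<open>In matrix terms, perm_conj \<sigma> A = P A P^T with P = perm_matrix \<sigma>.\<close>
definition perm_conj :: "('n \<Rightarrow> 'n) \<Rightarrow> 'a^'n^'n \<Rightarrow> 'a^'n^'n" where
  "perm_conj \<sigma> A = (\<chi> i j. A $ \<sigma> i $ \<sigma> j)"

lemma perm_matrix_mult_vector: "perm_matrix \<sigma> *v x = (\<chi> i. x $ \<sigma> i)"
  unfolding perm_matrix_def matrix_vector_mult_def
  by (simp add: if_distrib[of "\<lambda>t. t * _"] sum.delta cong: if_cong)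

lemma perm_matrix_mult_matrix_vector:
  assumes "\<sigma> permutes UNIV"
  shows "perm_matrix \<sigma> *v (A *v x) = perm_conj \<sigma> A *v (perm_matrix \<sigma> *v x)"
proof -
  have "(\<Sum>j\<in>UNIV. A $ \<sigma> i $ j * x $ j) = (\<Sum>j\<in>UNIV. A $ \<sigma> i $ \<sigma> j * x $ \<sigma> j)" for i
    using sum.permute[OF assms, of "\<lambda>j. A $ \<sigma> i $ j * x $ j"] by (simp add: comp_def)
  then show ?thesis
    unfolding perm_matrix_mult_vector by (simp add: perm_conj_def matrix_vector_mult_def vec_eq_iff)
qed

lemma perm_matrix_mult_ones: "perm_matrix \<sigma> *v (\<chi> i. 1) = (\<chi> i. 1)"
  by (simp add: perm_matrix_mult_vector vec_eq_iff)

lemma stochastic_perm_conj: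
  assumes "\<sigma> permutes UNIV" "stochastic A"
  shows "stochastic (perm_conj \<sigma> A)"
proof -
  have "(\<Sum>j\<in>UNIV. A $ \<sigma> i $ \<sigma> j) = 1" for i
    using sum.permute[OF assms(1), of "\<lambda>j. A $ \<sigma> i $ j"] assms(2)
    by (simp add: comp_def stochastic_def)
  then show ?thesis
    using assms(2) by (simp add: stochastic_def perm_conj_def)
qed

lemma graph_connected_perm_conj:
  assumes \<sigma>: "\<sigma> permutes UNIV" and conn: "graph_connected A"
  shows "graph_connected (perm_conj \<sigma> A)"
  unfolding graph_connected_def
proof (intro allI)
  fix i j
  let ?E = "{(k, l). A $ k $ l > 0}" and ?E' = "{(k, l). perm_conj \<sigma> A $ k $ l > 0}"
  have relabel: "(inv \<sigma> a, inv \<sigma> b) \<in> ?E'\<^sup>*" if "(a, b) \<in> ?E\<^sup>*" for a b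
    using that
  proof (induction rule: rtrancl_induct)
    case (step b c)
    then have "(inv \<sigma> b, inv \<sigma> c) \<in> ?E'"
      by (simp add: perm_conj_def permutes_inverses(1)[OF \<sigma>])
    with step.IH show ?case
      by (rule rtrancl.rtrancl_into_rtrancl)
  qed simp
  have "(\<sigma> i, \<sigma> j) \<in> ?E\<^sup>*"
    using conn by (simp add: graph_connected_def)
  from relabel[OF this] show "(i, j) \<in> ?E'\<^sup>*"
    by (simp add: permutes_inverses(2)[OF \<sigma>])
qed

lemma perm_conj_in_classA:
  assumes "\<sigma> permutes UNIV" "A \<in> classA"
  shows "perm_conj \<sigma> A \<in> classA"
proof -
  have "stochastic (perm_conj \<sigma> A)" "graph_connected (perm_conj \<sigma> A)"
    using assms stochastic_perm_conj graph_connected_perm_conj by (auto simp: classA_def)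
  with assms(2) show ?thesis
    by (simp add: classA_def perm_conj_def)
qed

lemma perm_matricesE:
  assumes "P \<in> perm_matrices"
  obtains \<sigma> where "\<sigma> permutes UNIV" "P = perm_matrix \<sigma>"
  using assms by (auto simp: perm_matrices_def)

lemma finite_perm_matrices: "finite (perm_matrices :: (real^'n^'n) set)"
proof -
  have "(perm_matrices :: (real^'n^'n) set) = perm_matrix ` {\<sigma>. \<sigma> permutes UNIV}"
    by (auto simp: perm_matrices_def)
  then show ?thesis
    by (metis finite_imageI finite_permutations finite_class.finite_UNIV)
qed

lemma mat_1_in_perm_matrices: "mat 1 \<in> (perm_matrices :: (real^'n^'n) set)"
proof -
  have "perm_matrix id \<in> (perm_matrices :: (real^'n^'n) set)"
    unfolding perm_matrices_def using permutes_id by blast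
  moreover have "perm_matrix id = (mat 1 :: real^'n^'n)"
    by (simp add: perm_matrix_def mat_def vec_eq_iff)
  ultimately show ?thesis
    by simp
qed

lemma perm_matrix_intertwines_classA:
  assumes "P \<in> perm_matrices" "A \<in> classA"
  obtains A' where "A' \<in> classA" "P *v (A *v x) = A' *v (P *v x)"
  using assms perm_matrix_mult_matrix_vector perm_conj_in_classA by (metis perm_matricesE)

lemma perm_matrices_mult_ones: "P \<in> perm_matrices \<Longrightarrow> P *v (\<chi> i. 1) = (\<chi> i. 1)"
  by (auto elim: perm_matricesE simp: perm_matrix_mult_ones)

lemma sum_congruences_eq_0_imp_eq_0:
  fixes M :: "real^'n^'n"
  assumes "finite S" "mat 1 \<in> S" "transpose M = M" "\<And>x. x \<bullet> (M *v x) \<ge> 0"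
    and "(\<Sum>P\<in>S. transpose P ** M ** P) = 0"
  shows "M = 0"
proof (rule symmetric_matrix_eq_0_if_quadratic_form_0[OF \<open>transpose M = M\<close>])
  fix x :: "real^'n"
  have "(\<Sum>P\<in>S. (P *v x) \<bullet> (M *v (P *v x))) = 0"
    using quadratic_form_sum_congruences[OF \<open>finite S\<close>, of x M] assms(5) by simp
  then have "\<forall>P\<in>S. (P *v x) \<bullet> (M *v (P *v x)) = 0"
    using assms(4) by (simp add: sum_nonneg_eq_0_iff[OF \<open>finite S\<close>])
  then show "x \<bullet> (M *v x) = 0"
    using \<open>mat 1 \<in> S\<close> by (metis matrix_vector_mul_lid)
qed

theorem lemma1:
  fixes M :: "real^'n^'n"
  assumes "classQ M"
  shows "classQ (\<Sum>P\<in>perm_matrices. transpose P ** M ** P)"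
proof -
  let ?q = "\<lambda>N (x::real^'n). x \<bullet> (N *v x)"
  let ?Z = "\<Sum>P\<in>perm_matrices. transpose P ** M ** P"
  have nz: "M \<noteq> 0" and sym: "transpose M = M" and psd: "\<And>x. ?q M x \<ge> 0"
    and contr: "\<And>A x. A \<in> classA \<Longrightarrow> ?q M (A *v x) \<le> ?q M x" and e0: "?q M (\<chi> i. 1) = 0"
    using assms by (auto simp: classQ_def Let_def)
  have qZ: "?q ?Z x = (\<Sum>P\<in>perm_matrices. ?q M (P *v x))" for x
    using quadratic_form_sum_congruences[OF finite_perm_matrices] .
  have contr_perm: "?q M (P *v (A *v x)) \<le> ?q M (P *v x)"
    if "P \<in> perm_matrices" "A \<in> classA" for P A x
    using perm_matrix_intertwines_classA[OF that] contr by metis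
  have "transpose ?Z = ?Z"
    by (simp add: transpose_sum matrix_transpose_mul sym matrix_mul_assoc)
  moreover have "?Z \<noteq> 0"
    using sum_congruences_eq_0_imp_eq_0[OF finite_perm_matrices mat_1_in_perm_matrices sym psd] nz
    by blast
  moreover have "?q ?Z (A *v x) \<le> ?q ?Z x" if "A \<in> classA" for A x
    unfolding qZ using that contr_perm by (blast intro: sum_mono)
  moreover have "?q ?Z (\<chi> i. 1) = 0"
    by (simp add: qZ e0 perm_matrices_mult_ones)
  ultimately show ?thesis
    using psd by (simp add: classQ_def Let_def qZ sum_nonneg)
qed

end
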